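(* If a $T_1$-space $X$ has a regular base at non-isolated points, then (1) $X$ is proto-metrizable, and (2) $X$ is a $\gamma$-space.
   Context: $I(X)$ is the set of isolated points, $\mathcal{I}(X)=\{\{x\}:x\in I(X)\}$. A base $\mathcal{B}$ is regular at $x$ if for every neighborhood $U$ of $x$ there is an open $V$ with $x\in V\subset U$ such that $\{B\in\mathcal{B}: B\cap V\neq\emptyset,\ B\not\subset U\}$ is finite; a regular base at non-isolated points is regular at every $x\in X\setminus I(X)$. An ortho-base of $X$ is a base $\mathcal{B}$ such that for every $\mathcal{A}\subset\mathcal{B}$, either $\bigcap\mathcal{A}$ is open in $X$, or $\bigcap\mathcal{A}=\{x\}$ for some $x\notin I(X)$ and $\mathcal{A}$ is a neighborhood base at $x$. $X$ is proto-metrizable if it is (Hausdorff) paracompact and has an ortho-base. A $g$-function assigns to each $n\in\mathbb{N}$, $x\in X$ an open set $g(n,x)\ni x$; $X$ is a $\gamma$-space if there is a $g$-function such that for each $x\in X$ and sequences $\{x_n\},\{y_n\}$ with $x_n\in g(n,y_n)$ and $y_n\in g(n,x)$ for all $n$, we have $x_n\to x$. *)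

theory Defs
  imports "HOL-Analysis.Analysis"
begin

definition isolated_pts :: "'a topology \<Rightarrow> 'a set" where
  "isolated_pts X = {x \<in> topspace X. openin X {x}}"

definition is_base :: "'a topology \<Rightarrow> 'a set set \<Rightarrow> bool" where
  "is_base X \<B> \<longleftrightarrow> (\<forall>B\<in>\<B>. openin X B) \<and>
     (\<forall>U x. openin X U \<and> x \<in> U \<longrightarrow> (\<exists>B\<in>\<B>. x \<in> B \<and> B \<subseteq> U))"

definition nbhd_of :: "'a topology \<Rightarrow> 'a set \<Rightarrow> 'a \<Rightarrow> bool" where
  "nbhd_of X U x \<longleftrightarrow> U \<subseteq> topspace X \<and> (\<exists>W. openin X W \<and> x \<in> W \<and> W \<subseteq> U)"

definition regular_at :: "'a topology \<Rightarrow> 'a set set \<Rightarrow> 'a \<Rightarrow> bool" where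
  "regular_at X \<B> x \<longleftrightarrow>
     (\<forall>U. nbhd_of X U x \<longrightarrow>
        (\<exists>V. openin X V \<and> x \<in> V \<and> V \<subseteq> U \<and>
             finite {B \<in> \<B>. B \<inter> V \<noteq> {} \<and> \<not> B \<subseteq> U}))"

definition regular_base_at_nonisolated :: "'a topology \<Rightarrow> 'a set set \<Rightarrow> bool" where
  "regular_base_at_nonisolated X \<B> \<longleftrightarrow> is_base X \<B> \<and>
     (\<forall>x \<in> topspace X - isolated_pts X. regular_at X \<B> x)"

definition nbhd_base_at :: "'a topology \<Rightarrow> 'a set set \<Rightarrow> 'a \<Rightarrow> bool" where
  "nbhd_base_at X \<A> x \<longleftrightarrow> (\<forall>A\<in>\<A>. nbhd_of X A x) \<and>
     (\<forall>U. nbhd_of X U x \<longrightarrow> (\<exists>A\<in>\<A>. A \<subseteq> U))"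

text \<open>Ortho-base; intersections are taken inside the space X (so the empty
  subfamily has intersection X).\<close>
definition ortho_base :: "'a topology \<Rightarrow> 'a set set \<Rightarrow> bool" where
  "ortho_base X \<B> \<longleftrightarrow> is_base X \<B> \<and>
     (\<forall>\<A> \<subseteq> \<B>. openin X (topspace X \<inter> \<Inter>\<A>) \<or>
        (\<exists>x \<in> topspace X - isolated_pts X.
            topspace X \<inter> \<Inter>\<A> = {x} \<and> nbhd_base_at X \<A> x))"

definition paracompact_space :: "'a topology \<Rightarrow> bool" where
  "paracompact_space X \<longleftrightarrow> Hausdorff_space X \<and>
     (\<forall>\<U>. (\<forall>U\<in>\<U>. openin X U) \<and> \<Union>\<U> = topspace X \<longrightarrow>
        (\<exists>\<V>. (\<forall>V\<in>\<V>. openin X V) \<and> \<Union>\<V> = topspace X \<and>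
             (\<forall>V\<in>\<V>. \<exists>U\<in>\<U>. V \<subseteq> U) \<and> locally_finite_in X \<V>))"

definition proto_metrizable :: "'a topology \<Rightarrow> bool" where
  "proto_metrizable X \<longleftrightarrow> paracompact_space X \<and> (\<exists>\<B>. ortho_base X \<B>)"

definition g_function :: "'a topology \<Rightarrow> (nat \<Rightarrow> 'a \<Rightarrow> 'a set) \<Rightarrow> bool" where
  "g_function X g \<longleftrightarrow> (\<forall>n. \<forall>x \<in> topspace X. openin X (g n x) \<and> x \<in> g n x)"

definition gamma_space :: "'a topology \<Rightarrow> bool" where
  "gamma_space X \<longleftrightarrow> (\<exists>g. g_function X g \<and>
     (\<forall>x \<in> topspace X. \<forall>xs ys.
        (\<forall>n. xs n \<in> topspace X \<and> ys n \<in> topspace X \<and>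
             xs n \<in> g n (ys n) \<and> ys n \<in> g n x) \<longrightarrow>
        limitin X xs x sequentially))"

end

theory Submission
  imports Defs
begin

text \<open>
  Regularity of \<open>\<B>\<close> at a non-isolated point \<open>x\<close> means that every neighbourhood
  \<open>U\<close> of \<open>x\<close> contains all but finitely many members of \<open>\<B>\<close> that contain \<open>x\<close>,
  while in a \<open>T\<^sub>1\<close>-space infinitely many members of \<open>\<B>\<close> contain \<open>x\<close>. Hence an
  infinite subfamily of \<open>\<B>\<close> with a common non-isolated point \<open>x\<close> is a neighbourhood
  base at \<open>x\<close> with intersection \<open>{x}\<close>, so \<open>\<B>\<close> is an ortho-base. Given an open
  cover, a member of \<open>\<B>\<close> refining it lies in only finitely many larger members, hence
  in a maximal one; the maximal refining members are locally finite at non-isolated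
  points and, together with singletons of isolated points, yield a locally finite open
  refinement. For the \<open>\<gamma>\<close>-property let \<open>g n y\<close> be the intersection of \<open>n + 1\<close>
  distinct members of \<open>\<B>\<close> containing \<open>y\<close>: given \<open>U \<ni> x\<close>, take \<open>V \<ni> x\<close> met by
  only \<open>N\<close> members of \<open>\<B>\<close> not inside \<open>U\<close>; for \<open>n \<ge> N\<close> one of the \<open>n + 1\<close> members
  chosen at any \<open>y \<in> V\<close> lies in \<open>U\<close>, and eventually \<open>g n x \<subseteq> V\<close>.
\<close>

lemma openin_imp_nbhd_of: "openin X U \<Longrightarrow> x \<in> U \<Longrightarrow> nbhd_of X U x"
  by (auto simp: nbhd_of_def openin_subset)

lemma openin_if_subset_isolated_pts: "S \<subseteq> isolated_pts X \<Longrightarrow> openin X S"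
  by (subst openin_subopen) (auto simp: isolated_pts_def)

lemma regular_at_finite_not_subset:
  assumes "regular_at X \<B> x" "nbhd_of X U x"
  shows "finite {B\<in>\<B>. x \<in> B \<and> \<not> B \<subseteq> U}"
proof -
  obtain V where "x \<in> V" "finite {B\<in>\<B>. B \<inter> V \<noteq> {} \<and> \<not> B \<subseteq> U}"
    using assms unfolding regular_at_def by blast
  then show ?thesis
    by (elim finite_subset[rotated]) auto
qed

lemma t1_space_Inter_eq_singleton:
  assumes "t1_space X" "x \<in> topspace X" "x \<in> \<Inter>\<A>"
    and small: "\<And>U. openin X U \<Longrightarrow> x \<in> U \<Longrightarrow> \<exists>A\<in>\<A>. A \<subseteq> U"
  shows "topspace X \<inter> \<Inter>\<A> = {x}"
proof -
  have "z \<notin> \<Inter>\<A>" if "z \<in> topspace X" "z \<noteq> x" for z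
  proof -
    have "openin X (topspace X - {z})"
      using \<open>t1_space X\<close> by (meson openin_topspace t1_space_openin_delete_alt)
    then obtain A where "A \<in> \<A>" "A \<subseteq> topspace X - {z}"
      using small \<open>x \<in> topspace X\<close> \<open>z \<noteq> x\<close> by blast
    then show ?thesis by blast
  qed
  then show ?thesis
    using assms(2,3) by blast
qed

lemma infinite_base_at_nonisolated:
  assumes "t1_space X" "is_base X \<B>" "x \<in> topspace X - isolated_pts X"
  shows "infinite {B\<in>\<B>. x \<in> B}"
proof
  assume fin: "finite {B\<in>\<B>. x \<in> B}"
  have small: "\<exists>A\<in>{B\<in>\<B>. x \<in> B}. A \<subseteq> U" if "openin X U" "x \<in> U" for U
    using \<open>is_base X \<B>\<close> that unfolding is_base_def by blast
  have "openin X (topspace X \<inter> \<Inter>{B\<in>\<B>. x \<in> B})"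
    using fin \<open>is_base X \<B>\<close> by (intro openin_Int_Inter) (auto simp: is_base_def)
  moreover have "topspace X \<inter> \<Inter>{B\<in>\<B>. x \<in> B} = {x}"
    using assms small by (intro t1_space_Inter_eq_singleton) auto
  ultimately have "openin X {x}"
    by simp
  with assms(3) show False
    by (simp add: isolated_pts_def)
qed

lemma regular_at_disjoint_base_element:
  assumes "t1_space X" "is_base X \<B>" "regular_at X \<B> x" "x \<in> topspace X"
    and y: "y \<in> topspace X - isolated_pts X" "x \<noteq> y"
  shows "\<exists>V B. openin X V \<and> x \<in> V \<and> B \<in> \<B> \<and> y \<in> B \<and> B \<inter> V = {}"
proof -
  have "openin X (topspace X - {y})"
    using \<open>t1_space X\<close> by (meson openin_topspace t1_space_openin_delete_alt)
  then have "nbhd_of X (topspace X - {y}) x"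
    using assms(4) y(2) by (simp add: openin_imp_nbhd_of)
  then obtain V where V: "openin X V" "x \<in> V"
    and fin: "finite {B\<in>\<B>. B \<inter> V \<noteq> {} \<and> \<not> B \<subseteq> topspace X - {y}}"
    using assms(3) unfolding regular_at_def by blast
  have "{B\<in>\<B>. y \<in> B \<and> B \<inter> V \<noteq> {}} \<subseteq> {B\<in>\<B>. B \<inter> V \<noteq> {} \<and> \<not> B \<subseteq> topspace X - {y}}"
    by blast
  then have "finite {B\<in>\<B>. y \<in> B \<and> B \<inter> V \<noteq> {}}"
    using fin by (rule finite_subset)
  moreover have "infinite {B\<in>\<B>. y \<in> B}"
    using infinite_base_at_nonisolated[OF assms(1,2) y(1)] .
  ultimately have "\<not> {B\<in>\<B>. y \<in> B} \<subseteq> {B\<in>\<B>. y \<in> B \<and> B \<inter> V \<noteq> {}}"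
    using finite_subset by blast
  with V show ?thesis
    by blast
qed

lemma Hausdorff_space_if_regular_base_at_nonisolated:
  assumes t1: "t1_space X" and reg: "regular_base_at_nonisolated X \<B>"
  shows "Hausdorff_space X"
  unfolding Hausdorff_space_def
proof (intro allI impI)
  fix x y assume xy: "x \<in> topspace X \<and> y \<in> topspace X \<and> x \<noteq> y"
  have base: "is_base X \<B>"
    using reg by (simp add: regular_base_at_nonisolated_def)
  have co_open: "openin X (topspace X - {z})" for z
    using t1 by (meson openin_topspace t1_space_openin_delete_alt)
  show "\<exists>U V. openin X U \<and> openin X V \<and> x \<in> U \<and> y \<in> V \<and> disjnt U V"
  proof (cases "openin X {x} \<or> openin X {y}")
    case True
    then show ?thesis
    proof
      assume "openin X {x}"
      then show ?thesis
        using xy co_open[of x]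
        by (intro exI[of _ "{x}"] exI[of _ "topspace X - {x}"]) (auto simp: disjnt_def)
    next
      assume "openin X {y}"
      then show ?thesis
        using xy co_open[of y]
        by (intro exI[of _ "topspace X - {y}"] exI[of _ "{y}"]) (auto simp: disjnt_def)
    qed
  next
    case False
    then have "regular_at X \<B> x" "y \<in> topspace X - isolated_pts X"
      using reg xy by (auto simp: regular_base_at_nonisolated_def isolated_pts_def)
    then obtain V B where "openin X V" "x \<in> V" "B \<in> \<B>" "y \<in> B" "B \<inter> V = {}"
      using regular_at_disjoint_base_element[OF t1 base] xy by blast
    then show ?thesis
      using base by (intro exI[of _ V] exI[of _ B]) (auto simp: disjnt_def is_base_def)
  qed
qed

lemma nbhd_base_at_if_infinite_subfamily:
  assumes "regular_at X \<B> x" "\<A> \<subseteq> \<B>" "infinite \<A>" "x \<in> \<Inter>\<A>"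
    and "\<And>A. A \<in> \<A> \<Longrightarrow> openin X A"
  shows "nbhd_base_at X \<A> x"
  unfolding nbhd_base_at_def
proof (intro conjI ballI allI impI)
  show "nbhd_of X A x" if "A \<in> \<A>" for A
    using assms(4,5) that by (blast intro: openin_imp_nbhd_of)
  fix U assume "nbhd_of X U x"
  then have "finite {B\<in>\<B>. x \<in> B \<and> \<not> B \<subseteq> U}"
    by (rule regular_at_finite_not_subset[OF assms(1)])
  moreover have "\<not> \<A> \<subseteq> {B\<in>\<B>. x \<in> B \<and> \<not> B \<subseteq> U}"
    using assms(3) calculation by (meson finite_subset)
  ultimately show "\<exists>A\<in>\<A>. A \<subseteq> U"
    using assms(2,4) by blast
qed

lemma ortho_base_if_regular_base_at_nonisolated:
  assumes t1: "t1_space X" and reg: "regular_base_at_nonisolated X \<B>"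
  shows "ortho_base X \<B>"
  unfolding ortho_base_def
proof (intro conjI allI impI)
  show base: "is_base X \<B>"
    using reg by (simp add: regular_base_at_nonisolated_def)
  then have open_base: "\<And>B. B \<in> \<B> \<Longrightarrow> openin X B"
    by (simp add: is_base_def)
  fix \<A> assume "\<A> \<subseteq> \<B>"
  consider "finite \<A>"
    | x where "infinite \<A>" "x \<in> topspace X - isolated_pts X" "x \<in> \<Inter>\<A>"
    | "topspace X \<inter> \<Inter>\<A> \<subseteq> isolated_pts X"
    by auto
  then show "openin X (topspace X \<inter> \<Inter>\<A>) \<or>
      (\<exists>x \<in> topspace X - isolated_pts X. topspace X \<inter> \<Inter>\<A> = {x} \<and> nbhd_base_at X \<A> x)"
  proof cases
    case 1
    then show ?thesis
      using \<open>\<A> \<subseteq> \<B>\<close> open_base by (blast intro: openin_Int_Inter)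
  next
    case (2 x)
    then have "nbhd_base_at X \<A> x"
      using reg \<open>\<A> \<subseteq> \<B>\<close> open_base
      by (intro nbhd_base_at_if_infinite_subfamily) (auto simp: regular_base_at_nonisolated_def)
    moreover from this have "topspace X \<inter> \<Inter>\<A> = {x}"
      using t1 2 by (intro t1_space_Inter_eq_singleton) (auto simp: nbhd_base_at_def openin_imp_nbhd_of)
    ultimately show ?thesis
      using 2 by blast
  next
    case 3
    then show ?thesis
      by (simp add: openin_if_subset_isolated_pts)
  qed
qed

definition distinct_base_nbhds :: "'a topology \<Rightarrow> 'a set set \<Rightarrow> ('a \<Rightarrow> nat \<Rightarrow> 'a set) \<Rightarrow> bool" where
  "distinct_base_nbhds X \<B> e \<longleftrightarrow>
     (\<forall>y \<in> topspace X - isolated_pts X. inj (e y) \<and> range (e y) \<subseteq> {B\<in>\<B>. y \<in> B})"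

definition nested_base_g :: "'a topology \<Rightarrow> ('a \<Rightarrow> nat \<Rightarrow> 'a set) \<Rightarrow> nat \<Rightarrow> 'a \<Rightarrow> 'a set" where
  "nested_base_g X e n y = (if openin X {y} then {y} else (\<Inter>k\<le>n. e y k))"

lemma distinct_base_nbhds_exists:
  assumes "t1_space X" "is_base X \<B>"
  shows "\<exists>e. distinct_base_nbhds X \<B> e"
proof -
  have "\<forall>y \<in> topspace X - isolated_pts X. \<exists>f :: nat \<Rightarrow> 'a set. inj f \<and> range f \<subseteq> {B\<in>\<B>. y \<in> B}"
    using infinite_base_at_nonisolated[OF assms] infinite_countable_subset by blast
  then show ?thesis
    unfolding distinct_base_nbhds_def by (rule bchoice)
qed

lemma g_function_nested_base_g:
  assumes "is_base X \<B>" "distinct_base_nbhds X \<B> e"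
  shows "g_function X (nested_base_g X e)"
  unfolding g_function_def
proof (intro allI ballI conjI)
  fix n y assume y: "y \<in> topspace X"
  show "openin X (nested_base_g X e n y)"
  proof (cases "openin X {y}")
    case False
    then have "range (e y) \<subseteq> \<B>"
      using assms(2) y by (auto simp: distinct_base_nbhds_def isolated_pts_def)
    then have "openin X (\<Inter>k\<le>n. e y k)"
      using assms(1) by (intro openin_INT2) (auto simp: is_base_def)
    with False show ?thesis
      by (simp add: nested_base_g_def)
  qed (simp add: nested_base_g_def)
  show "y \<in> nested_base_g X e n y"
    using assms(2) y by (auto simp: nested_base_g_def distinct_base_nbhds_def isolated_pts_def)
qed

lemma nested_base_g_subset:
  assumes e: "distinct_base_nbhds X \<B> e" and y: "y \<in> topspace X" "y \<in> V" and "V \<subseteq> U"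
    and fin: "finite {B\<in>\<B>. B \<inter> V \<noteq> {} \<and> \<not> B \<subseteq> U}"
    and n: "card {B\<in>\<B>. B \<inter> V \<noteq> {} \<and> \<not> B \<subseteq> U} \<le> n"
  shows "nested_base_g X e n y \<subseteq> U"
proof (cases "openin X {y}")
  case True
  then show ?thesis
    using y \<open>V \<subseteq> U\<close> by (auto simp: nested_base_g_def)
next
  case False
  let ?F = "{B\<in>\<B>. B \<inter> V \<noteq> {} \<and> \<not> B \<subseteq> U}"
  have inj: "inj (e y)" and range: "range (e y) \<subseteq> {B\<in>\<B>. y \<in> B}"
    using e y False by (auto simp: distinct_base_nbhds_def isolated_pts_def)
  have "\<not> e y ` {..n} \<subseteq> ?F"
  proof
    assume "e y ` {..n} \<subseteq> ?F"
    then have "card (e y ` {..n}) \<le> card ?F"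
      using fin by (rule card_mono[rotated])
    moreover have "card (e y ` {..n}) = Suc n"
      using card_image[OF inj_on_subset[OF inj subset_UNIV]] by simp
    ultimately show False
      using n by simp
  qed
  then obtain k where "k \<le> n" "e y k \<notin> ?F"
    by blast
  moreover have "e y k \<in> \<B>" "y \<in> e y k"
    using range by auto
  ultimately have "e y k \<subseteq> U"
    using y by blast
  with \<open>k \<le> n\<close> False show ?thesis
    by (auto simp: nested_base_g_def)
qed

lemma eventually_nested_base_g_subset:
  assumes "regular_at X \<B> x" "distinct_base_nbhds X \<B> e"
    and x: "x \<in> topspace X - isolated_pts X" and "nbhd_of X V x"
  shows "eventually (\<lambda>n. nested_base_g X e n x \<subseteq> V) sequentially"
proof -
  have inj: "inj (e x)" and range: "range (e x) \<subseteq> {B\<in>\<B>. x \<in> B}"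
    using assms(2) x by (auto simp: distinct_base_nbhds_def)
  have "MOST B. B \<in> \<B> \<and> x \<in> B \<longrightarrow> B \<subseteq> V"
    using regular_at_finite_not_subset[OF assms(1,4)] by (simp add: eventually_cofinite)
  then have "MOST n. e x n \<in> \<B> \<and> x \<in> e x n \<longrightarrow> e x n \<subseteq> V"
    using inj by (rule MOST_inj)
  moreover have "e x n \<in> \<B> \<and> x \<in> e x n" for n
    using range by auto
  ultimately have "eventually (\<lambda>n. e x n \<subseteq> V) sequentially"
    by (simp add: cofinite_eq_sequentially)
  then show ?thesis
    by (rule eventually_mono) (use x in \<open>auto simp: nested_base_g_def isolated_pts_def\<close>)
qed

lemma limitin_nested_base_g:
  assumes reg_x: "regular_at X \<B> x" and e: "distinct_base_nbhds X \<B> e"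
    and x: "x \<in> topspace X - isolated_pts X"
    and ys: "\<And>n. ys n \<in> topspace X" "\<And>n. ys n \<in> nested_base_g X e n x"
    and xs: "\<And>n. xs n \<in> nested_base_g X e n (ys n)"
  shows "limitin X xs x sequentially"
  unfolding limitin_def
proof (intro conjI allI impI)
  fix U assume "openin X U \<and> x \<in> U"
  then have "nbhd_of X U x"
    by (simp add: openin_imp_nbhd_of)
  then obtain V where V: "openin X V" "x \<in> V" "V \<subseteq> U"
    and fin: "finite {B\<in>\<B>. B \<inter> V \<noteq> {} \<and> \<not> B \<subseteq> U}"
    using reg_x unfolding regular_at_def by blast
  have "eventually (\<lambda>n. nested_base_g X e n x \<subseteq> V) sequentially"
    using reg_x e x V by (intro eventually_nested_base_g_subset openin_imp_nbhd_of)
  moreover have "eventually (\<lambda>n. card {B\<in>\<B>. B \<inter> V \<noteq> {} \<and> \<not> B \<subseteq> U} \<le> n) sequentially"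
    by (rule eventually_ge_at_top)
  ultimately show "eventually (\<lambda>n. xs n \<in> U) sequentially"
  proof eventually_elim
    case (elim n)
    then have "ys n \<in> V"
      using ys(2) by blast
    then have "nested_base_g X e n (ys n) \<subseteq> U"
      using nested_base_g_subset[OF e ys(1) _ V(3) fin elim(2)] by blast
    then show ?case
      using xs by blast
  qed
qed (use x in blast)

lemma gamma_space_if_regular_base_at_nonisolated:
  assumes t1: "t1_space X" and reg: "regular_base_at_nonisolated X \<B>"
  shows "gamma_space X"
proof -
  have base: "is_base X \<B>"
    using reg by (simp add: regular_base_at_nonisolated_def)
  obtain e where e: "distinct_base_nbhds X \<B> e"
    using distinct_base_nbhds_exists[OF t1 base] by blast
  let ?g = "nested_base_g X e"
  have "limitin X xs x sequentially"
    if x: "x \<in> topspace X"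
      and seq: "\<forall>n. xs n \<in> topspace X \<and> ys n \<in> topspace X \<and> xs n \<in> ?g n (ys n) \<and> ys n \<in> ?g n x"
    for x xs ys
  proof (cases "openin X {x}")
    case True
    then have "ys n = x" for n
      using seq by (simp add: nested_base_g_def)
    then have "xs n = x" for n
      using seq True by (simp add: nested_base_g_def)
    then show ?thesis
      using x by (simp add: limitin_sequentially)
  next
    case False
    then have "x \<in> topspace X - isolated_pts X"
      using x by (simp add: isolated_pts_def)
    moreover from this have "regular_at X \<B> x"
      using reg by (simp add: regular_base_at_nonisolated_def)
    ultimately show ?thesis
      using e seq by (intro limitin_nested_base_g[where ys = ys]) auto
  qed
  then show ?thesis
    unfolding gamma_space_def using g_function_nested_base_g[OF base e] by blast
qed

lemma locally_finite_in_traces_and_singletons: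
  assumes "\<Union>\<M> \<subseteq> topspace X"
    and W: "\<And>x. x \<in> W \<Longrightarrow> \<exists>V. openin X V \<and> x \<in> V \<and> V \<subseteq> W \<and> finite {m\<in>\<M>. m \<inter> V \<noteq> {}}"
    and isolated: "\<And>y. y \<in> topspace X - W \<Longrightarrow> openin X {y}"
  shows "locally_finite_in X ((\<lambda>m. m \<inter> W) ` \<M> \<union> (\<lambda>y. {y}) ` (topspace X - W))"
    (is "locally_finite_in X ?\<V>")
  unfolding locally_finite_in_def
proof (intro conjI ballI)
  show "\<Union>?\<V> \<subseteq> topspace X"
    using assms(1) by auto
  fix x assume x: "x \<in> topspace X"
  show "\<exists>V. openin X V \<and> x \<in> V \<and> finite {A\<in>?\<V>. A \<inter> V \<noteq> {}}"
  proof (cases "x \<in> W")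
    case True
    then obtain V where V: "openin X V" "x \<in> V" "V \<subseteq> W" "finite {m\<in>\<M>. m \<inter> V \<noteq> {}}"
      using W by blast
    have "{A\<in>?\<V>. A \<inter> V \<noteq> {}} \<subseteq> (\<lambda>m. m \<inter> W) ` {m\<in>\<M>. m \<inter> V \<noteq> {}}"
      using V(3) by auto
    then have "finite {A\<in>?\<V>. A \<inter> V \<noteq> {}}"
      by (rule finite_surj[OF V(4)])
    with V(1,2) show ?thesis
      by blast
  next
    case False
    have "{A\<in>?\<V>. A \<inter> {x} \<noteq> {}} \<subseteq> {{x}}"
      using False by auto
    then have "finite {A\<in>?\<V>. A \<inter> {x} \<noteq> {}}"
      by (rule finite_subset) simp
    with isolated x False show ?thesis
      by blast
  qed
qed

lemma open_refinement_by_traces_and_singletons: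
  assumes cover: "\<Union>\<U> = topspace X"
    and M: "\<forall>m\<in>\<M>. openin X m \<and> (\<exists>U\<in>\<U>. m \<subseteq> U)"
    and W: "openin X W" "W \<subseteq> \<Union>\<M>"
    and W_locally_finite: "\<And>x. x \<in> W \<Longrightarrow>
          \<exists>V. openin X V \<and> x \<in> V \<and> V \<subseteq> W \<and> finite {m\<in>\<M>. m \<inter> V \<noteq> {}}"
    and isolated: "\<And>y. y \<in> topspace X - W \<Longrightarrow> openin X {y}"
  shows "\<exists>\<V>. (\<forall>V\<in>\<V>. openin X V) \<and> \<Union>\<V> = topspace X \<and>
           (\<forall>V\<in>\<V>. \<exists>U\<in>\<U>. V \<subseteq> U) \<and> locally_finite_in X \<V>"
proof -
  let ?\<V> = "(\<lambda>m. m \<inter> W) ` \<M> \<union> (\<lambda>y. {y}) ` (topspace X - W)"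
  have M_subset: "\<Union>\<M> \<subseteq> topspace X"
    using M openin_subset by blast
  then have "locally_finite_in X ?\<V>"
    using W_locally_finite isolated by (rule locally_finite_in_traces_and_singletons)
  moreover have "\<Union>?\<V> = topspace X"
  proof
    show "\<Union>?\<V> \<subseteq> topspace X"
      using M_subset by blast
    show "topspace X \<subseteq> \<Union>?\<V>"
    proof
      fix y assume y: "y \<in> topspace X"
      show "y \<in> \<Union>?\<V>"
      proof (cases "y \<in> W")
        case True
        then obtain m where "m \<in> \<M>" "y \<in> m"
          using W(2) by blast
        with True show ?thesis
          by blast
      next
        case False
        with y show ?thesis
          by blast
      qed
    qed
  qed
  moreover have open_refining: "openin X V \<and> (\<exists>U\<in>\<U>. V \<subseteq> U)" if "V \<in> ?\<V>" for V
  proof -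
    from that consider m where "m \<in> \<M>" "V = m \<inter> W" | y where "y \<in> topspace X - W" "V = {y}"
      by blast
    then show ?thesis
    proof cases
      case 1
      with M have "openin X m" "\<exists>U\<in>\<U>. m \<subseteq> U"
        by blast+
      with 1 W(1) show ?thesis
        by (blast intro: openin_Int)
    next
      case 2
      with isolated cover show ?thesis
        by blast
    qed
  qed
  ultimately show ?thesis
    by (intro exI[of _ ?\<V>] conjI ballI) (simp_all add: open_refining)
qed

lemma locally_finite_refinement_if_nonisolated:
  assumes cover: "\<Union>\<U> = topspace X"
    and M: "\<forall>m\<in>\<M>. openin X m \<and> (\<exists>U\<in>\<U>. m \<subseteq> U)"
    and locally_finite: "\<forall>x \<in> topspace X - isolated_pts X.
          \<exists>V. openin X V \<and> x \<in> V \<and> V \<subseteq> \<Union>\<M> \<and> finite {m\<in>\<M>. m \<inter> V \<noteq> {}}"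
  shows "\<exists>\<V>. (\<forall>V\<in>\<V>. openin X V) \<and> \<Union>\<V> = topspace X \<and>
           (\<forall>V\<in>\<V>. \<exists>U\<in>\<U>. V \<subseteq> U) \<and> locally_finite_in X \<V>"
proof -
  define \<W> where "\<W> = {V. openin X V \<and> V \<subseteq> \<Union>\<M> \<and> finite {m\<in>\<M>. m \<inter> V \<noteq> {}}}"
  have open_W: "openin X (\<Union>\<W>)"
    unfolding \<W>_def by blast
  have W_subset: "\<Union>\<W> \<subseteq> \<Union>\<M>"
    unfolding \<W>_def by blast
  have W_locally_finite: "\<exists>V. openin X V \<and> x \<in> V \<and> V \<subseteq> \<Union>\<W> \<and> finite {m\<in>\<M>. m \<inter> V \<noteq> {}}"
    if "x \<in> \<Union>\<W>" for x
  proof -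
    from that obtain V where "V \<in> \<W>" "x \<in> V"
      by blast
    moreover from this have "openin X V" "finite {m\<in>\<M>. m \<inter> V \<noteq> {}}"
      by (simp_all add: \<W>_def)
    ultimately show ?thesis
      by blast
  qed
  have isolated: "openin X {y}" if y: "y \<in> topspace X - \<Union>\<W>" for y
  proof (rule ccontr)
    assume "\<not> openin X {y}"
    with y have "y \<in> topspace X - isolated_pts X"
      by (simp add: isolated_pts_def)
    from locally_finite[rule_format, OF this] obtain V
      where "openin X V" "y \<in> V" "V \<subseteq> \<Union>\<M>" "finite {m\<in>\<M>. m \<inter> V \<noteq> {}}"
      by blast
    then have "V \<in> \<W>"
      by (simp add: \<W>_def)
    with y \<open>y \<in> V\<close> show False
      by blast
  qed
  show ?thesis
    using cover M open_W W_subset W_locally_finite isolated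
    by (rule open_refinement_by_traces_and_singletons)
qed

definition maximal_sets :: "'a set set \<Rightarrow> 'a set set" where
  "maximal_sets \<P> = {B\<in>\<P>. \<forall>C\<in>\<P>. B \<subseteq> C \<longrightarrow> C = B}"

lemma regular_at_maximal_superset:
  assumes "regular_at X \<B> x" "\<P> \<subseteq> \<B>" "B \<in> \<P>" "x \<in> B" "openin X B"
  shows "\<exists>m\<in>maximal_sets \<P>. B \<subseteq> m"
proof -
  let ?S = "{C\<in>\<P>. B \<subseteq> C}"
  have "?S \<subseteq> insert B {C\<in>\<B>. x \<in> C \<and> \<not> C \<subseteq> B}"
    using assms(2,4) by auto
  then have "finite ?S"
    using regular_at_finite_not_subset[OF assms(1) openin_imp_nbhd_of[OF assms(5,4)]]
    by (simp add: finite_subset)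
  moreover have "?S \<noteq> {}"
    using assms(3) by blast
  ultimately obtain m where m: "m \<in> ?S" "\<forall>C\<in>?S. m \<subseteq> C \<longrightarrow> m = C"
    using finite_has_maximal by meson
  have "m \<in> maximal_sets \<P>"
    unfolding maximal_sets_def
  proof (intro CollectI conjI ballI impI)
    fix C assume "C \<in> \<P>" "m \<subseteq> C"
    with m show "C = m"
      by auto
  qed (use m in blast)
  with m show ?thesis
    by blast
qed

lemma regular_at_maximal_sets_locally_finite:
  assumes "regular_at X \<B> x" "\<P> \<subseteq> \<B>" "m\<^sub>0 \<in> maximal_sets \<P>" "x \<in> m\<^sub>0" "openin X m\<^sub>0"
  shows "\<exists>V. openin X V \<and> x \<in> V \<and> V \<subseteq> m\<^sub>0 \<and> finite {m\<in>maximal_sets \<P>. m \<inter> V \<noteq> {}}"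
proof -
  obtain V where V: "openin X V" "x \<in> V" "V \<subseteq> m\<^sub>0"
    and fin: "finite {B\<in>\<B>. B \<inter> V \<noteq> {} \<and> \<not> B \<subseteq> m\<^sub>0}"
    using assms(1) openin_imp_nbhd_of[OF assms(5,4)] unfolding regular_at_def by blast
  have "{m\<in>maximal_sets \<P>. m \<inter> V \<noteq> {}} \<subseteq> insert m\<^sub>0 {B\<in>\<B>. B \<inter> V \<noteq> {} \<and> \<not> B \<subseteq> m\<^sub>0}"
    using assms(2,3) by (auto simp: maximal_sets_def)
  then have "finite {m\<in>maximal_sets \<P>. m \<inter> V \<noteq> {}}"
    using fin by (simp add: finite_subset)
  with V show ?thesis
    by blast
qed

lemma paracompact_space_if_regular_base_at_nonisolated:
  assumes t1: "t1_space X" and reg: "regular_base_at_nonisolated X \<B>"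
  shows "paracompact_space X"
  unfolding paracompact_space_def
proof (intro conjI allI impI)
  show "Hausdorff_space X"
    using t1 reg by (rule Hausdorff_space_if_regular_base_at_nonisolated)
  fix \<U> assume cover: "(\<forall>U\<in>\<U>. openin X U) \<and> \<Union>\<U> = topspace X"
  have base: "is_base X \<B>"
    using reg by (simp add: regular_base_at_nonisolated_def)
  define \<P> where "\<P> = {B\<in>\<B>. \<exists>U\<in>\<U>. B \<subseteq> U}"
  have "\<P> \<subseteq> \<B>"
    by (auto simp: \<P>_def)
  have open_refining: "\<forall>m\<in>maximal_sets \<P>. openin X m \<and> (\<exists>U\<in>\<U>. m \<subseteq> U)"
    using base by (auto simp: maximal_sets_def \<P>_def is_base_def)
  have "\<exists>V. openin X V \<and> x \<in> V \<and> V \<subseteq> \<Union>(maximal_sets \<P>) \<and> finite {m\<in>maximal_sets \<P>. m \<inter> V \<noteq> {}}"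
    if x: "x \<in> topspace X - isolated_pts X" for x
  proof -
    have reg_x: "regular_at X \<B> x"
      using reg x by (simp add: regular_base_at_nonisolated_def)
    obtain U where "U \<in> \<U>" "x \<in> U"
      using cover x by blast
    then obtain B where "B \<in> \<B>" "x \<in> B" "B \<subseteq> U"
      using base cover unfolding is_base_def by blast
    then have "B \<in> \<P>" "openin X B"
      using \<open>U \<in> \<U>\<close> base by (auto simp: \<P>_def is_base_def)
    then obtain m\<^sub>0 where m\<^sub>0: "m\<^sub>0 \<in> maximal_sets \<P>" "B \<subseteq> m\<^sub>0"
      using regular_at_maximal_superset[OF reg_x \<open>\<P> \<subseteq> \<B>\<close> _ \<open>x \<in> B\<close>] by blast
    then have "x \<in> m\<^sub>0" "openin X m\<^sub>0"
      using \<open>x \<in> B\<close> open_refining by auto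
    then show ?thesis
      using regular_at_maximal_sets_locally_finite[OF reg_x \<open>\<P> \<subseteq> \<B>\<close> m\<^sub>0(1)] m\<^sub>0(1) by blast
  qed
  then show "\<exists>\<V>. (\<forall>V\<in>\<V>. openin X V) \<and> \<Union>\<V> = topspace X \<and>
      (\<forall>V\<in>\<V>. \<exists>U\<in>\<U>. V \<subseteq> U) \<and> locally_finite_in X \<V>"
    using cover open_refining by (intro locally_finite_refinement_if_nonisolated) auto
qed

theorem mainTheorem14:
  fixes X :: "'a topology" and \<B> :: "'a set set"
  assumes "t1_space X"
    and "regular_base_at_nonisolated X \<B>"
  shows "proto_metrizable X \<and> gamma_space X"
  unfolding proto_metrizable_def
  using paracompact_space_if_regular_base_at_nonisolated[OF assms]
    ortho_base_if_regular_base_at_nonisolated[OF assms]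
    gamma_space_if_regular_base_at_nonisolated[OF assms]
  by blast

end
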